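(* Let $f$ be a transcendental meromorphic function in the plane, let $M>0$ and let $U$ be a component of $\{z\in\mathbb{C} : |f(z)|>M\}$ containing no poles of $f$ such that $v = \log f(z)$ is a conformal bijection from $U$ onto the half-plane $H = \{v : \mathrm{Re}\, v > N\}$, $N = \log M$. Let $\phi : H \to U$ be the inverse map. Let $v_0$ be sufficiently large and positive, and for integers $k\geq 0$ set $$V_k = \left\{ v_0 + t e^{i\theta} : t \geq 0,\ -\frac{\pi}{2^{k+2}} \leq \theta \leq \frac{\pi}{2^{k+2}} \right\}, \qquad G_k(v) = \frac{f^{(k)}(z)}{f(z)},\quad z = \phi(v).$$ Then there exist positive constants $d$ and $c_k$ ($k \ge 0$) such that $|\log \phi'(v)| \leq d \log(\mathrm{Re}\, v)$ as $v\to\infty$ in $V_1$, and $|\log|G_k(v)|| \leq c_k \log(\mathrm{Re}\, v)$ as $v \to \infty$ in $V_k$.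
   Context: Here $\log\phi'$ denotes a continuous branch on $V_1$ (which is simply connected and on which $\phi'$ has no zeros). *)

theory Defs
  imports "HOL-Complex_Analysis.Complex_Analysis" "HOL-Computational_Algebra.Polynomial"
begin

definition is_rational_fun :: "(complex \<Rightarrow> complex) \<Rightarrow> bool" where
  "is_rational_fun f \<longleftrightarrow>
     (\<exists>p q :: complex poly. q \<noteq> 0 \<and> (\<forall>z. poly q z \<noteq> 0 \<longrightarrow> f z = poly p z / poly q z))"

text \<open>Transcendental meromorphic function in the plane (poles only, value 0 at poles).\<close>
definition transcendental_meromorphic :: "(complex \<Rightarrow> complex) \<Rightarrow> bool" where
  "transcendental_meromorphic f \<longleftrightarrow> f nicely_meromorphic_on UNIV \<and> \<not> is_rational_fun f"

definition sector :: "real \<Rightarrow> nat \<Rightarrow> complex set" where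
  "sector v0 k = {complex_of_real v0 + complex_of_real t * exp (\<i> * complex_of_real \<theta>) | t \<theta>.
                   t \<ge> 0 \<and> - pi / 2 ^ (k + 2) \<le> \<theta> \<and> \<theta> \<le> pi / 2 ^ (k + 2)}"

end

theory Submission
  imports Defs
begin

(* The inverse map phi is univalent on the half-plane Re v > N, which contains the disc of radius
   Re v - N about v. A Koebe-type distortion estimate |phi''| <= C |phi'| / r for univalent maps of
   a disc of radius r (a consequence of Schottky's theorem) therefore gives
   psi = phi''/phi' = (log phi')' = O(1 / (Re v - N)). Integrating psi along the rays of a sector
   from its vertex v0 yields |log phi'(v)| = O(log Re v).
   Differentiating f = exp o g with g' = 1 / (phi' o g) shows f^(k)(phi v) / f(phi v) =
   phi'(v)^-k (1 + Q_k v), where Q_k is built from psi by sums, products and derivatives; by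
   Cauchy's estimates Q_k is again O(1 / (Re v - N)), so |log |G_k|| <= k |log phi'| + O(1). *)

section \<open>Distortion of univalent functions\<close>

lemma holomorphic_sqrt_normalized:
  assumes F: "F holomorphic_on ball 0 1" "\<And>z. z \<in> ball 0 1 \<Longrightarrow> F z \<noteq> 0" "F 0 = 1"
  obtains s where "s holomorphic_on ball 0 1" "\<And>z. z \<in> ball 0 1 \<Longrightarrow> s z ^ 2 = F z" "s 0 = 1"
proof -
  obtain l where l: "l holomorphic_on ball 0 1" "\<And>z. z \<in> ball 0 1 \<Longrightarrow> exp (l z) = F z"
    using holomorphic_logarithm_exists[OF convex_ball open_ball F(1,2), of 0] by auto
  define c where "c = exp (l 0 / 2)"
  have c_sq: "c ^ 2 = 1"
    using l(2)[of 0] F(3) by (simp add: c_def power2_eq_square exp_add[symmetric])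
  show thesis
  proof
    show "(\<lambda>z. exp (l z / 2) / c) holomorphic_on ball 0 1"
      using l(1) by (intro holomorphic_intros) (auto simp: c_def)
    show "(exp (l z / 2) / c) ^ 2 = F z" if "z \<in> ball 0 1" for z
      using l(2)[OF that] c_sq by (simp add: power_divide power2_eq_square exp_add[symmetric])
    show "exp (l 0 / 2) / c = 1" by (simp add: c_def)
  qed
qed

lemma Schottky_half_disc:
  obtains K :: real where
    "\<And>s u. s holomorphic_on ball 0 1 \<Longrightarrow> s 0 = 1 \<Longrightarrow> (\<And>z. z \<in> ball 0 1 \<Longrightarrow> s z \<noteq> 0 \<and> s z \<noteq> -1)
       \<Longrightarrow> norm u \<le> 1/2 \<Longrightarrow> norm (s u) \<le> K"
proof
  fix s :: "complex \<Rightarrow> complex" and u :: complex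
  assume s_hol: "s holomorphic_on ball 0 1" and s0: "s 0 = 1"
    and omits: "\<And>z. z \<in> ball 0 1 \<Longrightarrow> s z \<noteq> 0 \<and> s z \<noteq> -1" and u: "norm u \<le> 1/2"
  define \<tau> where "\<tau> z = - s ((3/4) * z)" for z
  have shrink: "(3/4) * z \<in> ball 0 1" if "z \<in> cball 0 1" for z :: complex
    using that by (auto simp: norm_mult)
  have \<tau>_hol: "\<tau> holomorphic_on cball 0 1" unfolding \<tau>_def
    by (intro holomorphic_intros holomorphic_on_compose_gen[OF _ s_hol, unfolded o_def])
      (use shrink in auto)
  have \<tau>_omits: "\<not> (\<tau> z = 0 \<or> \<tau> z = 1)" if "z \<in> cball 0 1" for z
    using omits[OF shrink[OF that]] by (auto simp: \<tau>_def minus_equation_iff)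
  have "norm (\<tau> ((4/3) * u)) \<le> exp (pi * exp (pi * (2 + 2 * 1 + 12 * (2/3) / (1 - 2/3))))"
    by (rule Schottky[OF \<tau>_hol _ \<tau>_omits]) (use u in \<open>auto simp: \<tau>_def s0 norm_mult\<close>)
  thus "norm (s u) \<le> exp (pi * exp (pi * (2 + 2 * 1 + 12 * (2/3) / (1 - 2/3))))"
    by (simp add: \<tau>_def)
qed

lemma univalent_omits_point_in_disc_2:
  assumes hol: "h holomorphic_on ball 0 1" and inj: "inj_on h (ball 0 1)"
    and h0: "h 0 = 0" and dh0: "deriv h 0 = 1"
  obtains w where "w \<notin> h ` ball 0 1" "norm w < 2"
proof -
  have "\<not> ball 0 2 \<subseteq> h ` ball 0 1"
  proof
    assume sub: "ball 0 2 \<subseteq> h ` ball 0 1"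
    obtain k where k: "k holomorphic_on (h ` ball 0 1)"
        "\<And>z. z \<in> ball 0 1 \<Longrightarrow> deriv h z * deriv k (h z) = 1"
        "\<And>z. z \<in> ball 0 1 \<Longrightarrow> k (h z) = z"
      using holomorphic_has_inverse[OF hol _ inj] by auto
    have dk: "deriv k 0 = 1" using k(2)[of 0] h0 dh0 by simp
    have kh: "k holomorphic_on ball 0 2" using k(1) sub holomorphic_on_subset by blast
    have "norm ((deriv ^^ 1) k 0) \<le> fact 1 * 1 / (3/2) ^ 1"
    proof (rule Cauchy_inequality)
      show "k holomorphic_on ball 0 (3/2)" using kh holomorphic_on_subset by (auto simp: subset_ball)
      show "continuous_on (cball 0 (3/2)) k"
        by (rule continuous_on_subset[OF holomorphic_on_imp_continuous_on[OF kh]])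
          (auto simp: cball_subset_ball_iff)
      fix x :: complex assume "norm (0 - x) = 3/2"
      then obtain z where "z \<in> ball 0 1" "x = h z" using sub by force
      thus "norm (k x) \<le> 1" using k(3) by (simp add: dist_norm)
    qed simp
    thus False using dk by simp
  qed
  then obtain w where "w \<in> ball 0 2" "w \<notin> h ` ball 0 1" by blast
  with that show thesis by simp
qed

(* s = sqrt (1 - h / w) with s 0 = 1 omits 0 because h omits w, and omits -1 because s z = -1
   would force h z = h 0; so Schottky's theorem bounds s, and hence h, on the half disc. This takes
   the place of the growth theorem for univalent functions. *)
lemma univalent_bounded_on_half_disc:
  obtains B :: real where "B > 0"
    "\<And>h u. h holomorphic_on ball 0 1 \<Longrightarrow> inj_on h (ball 0 1) \<Longrightarrow> h 0 = 0 \<Longrightarrow> deriv h 0 = 1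
       \<Longrightarrow> norm u \<le> 1/2 \<Longrightarrow> norm (h u) \<le> B"
proof -
  obtain K where K: "\<And>s u. s holomorphic_on ball 0 1 \<Longrightarrow> s 0 = 1
      \<Longrightarrow> (\<And>z. z \<in> ball 0 1 \<Longrightarrow> s z \<noteq> 0 \<and> s z \<noteq> -1) \<Longrightarrow> norm u \<le> 1/2 \<Longrightarrow> norm (s u) \<le> K"
    using Schottky_half_disc by blast
  show thesis
  proof (rule that[of "2 * (1 + K\<^sup>2)"])
    show "2 * (1 + K\<^sup>2) > 0" by (simp add: add_pos_nonneg)
    fix h :: "complex \<Rightarrow> complex" and u :: complex
    assume hol: "h holomorphic_on ball 0 1" and inj: "inj_on h (ball 0 1)"
      and h0: "h 0 = 0" and dh0: "deriv h 0 = 1" and u: "norm u \<le> 1/2"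
    obtain w where w: "w \<notin> h ` ball 0 1" "norm w < 2"
      using univalent_omits_point_in_disc_2[OF hol inj h0 dh0] by blast
    have w0: "w \<noteq> 0" using w(1) h0 by force
    define F where "F z = 1 - h z / w" for z
    have "F holomorphic_on ball 0 1" unfolding F_def using hol w0
      by (intro holomorphic_intros) auto
    moreover have F_nz: "F z \<noteq> 0" if "z \<in> ball 0 1" for z
      using w(1) w0 that by (auto simp: F_def field_simps)
    moreover have "F 0 = 1" by (simp add: F_def h0)
    ultimately obtain s where s: "s holomorphic_on ball 0 1" "\<And>z. z \<in> ball 0 1 \<Longrightarrow> s z ^ 2 = F z"
        "s 0 = 1"
      using holomorphic_sqrt_normalized by blast
    have "s z \<noteq> 0 \<and> s z \<noteq> -1" if z: "z \<in> ball 0 1" for z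
    proof
      show "s z \<noteq> 0" using s(2)[OF z] F_nz[OF z] by auto
      show "s z \<noteq> -1"
      proof
        assume "s z = -1"
        hence "h z = h 0" using s(2)[OF z] w0 h0 by (simp add: F_def)
        hence "z = 0" using inj z by (auto dest: inj_onD)
        thus False using \<open>s z = -1\<close> s(3) by simp
      qed
    qed
    hence s_le: "norm (s u) \<le> K" using K[OF s(1,3) _ u] by blast
    have "h u = w * (1 - s u ^ 2)" using s(2)[of u] u w0 by (simp add: F_def field_simps)
    hence "norm (h u) \<le> norm w * (1 + norm (s u) ^ 2)"
      by (metis norm_mult norm_power norm_one norm_triangle_ineq4 mult_left_mono norm_ge_zero)
    also have "\<dots> \<le> 2 * (1 + K\<^sup>2)"
      using w(2) s_le by (intro mult_mono add_left_mono power_mono) auto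
    finally show "norm (h u) \<le> 2 * (1 + K\<^sup>2)" .
  qed
qed

lemma univalent_normalization:
  fixes \<phi> :: "complex \<Rightarrow> complex"
  assumes hol: "\<phi> holomorphic_on ball a r" and inj: "inj_on \<phi> (ball a r)" and r: "r > 0"
    and h_def: "h = (\<lambda>z. (\<phi> (a + of_real r * z) - \<phi> a) / (of_real r * deriv \<phi> a))"
  shows "h holomorphic_on ball 0 1" "inj_on h (ball 0 1)" "h 0 = 0" "deriv h 0 = 1"
    and "deriv (deriv h) 0 = of_real r * deriv (deriv \<phi>) a / deriv \<phi> a"
proof -
  define d where "d = deriv \<phi> a"
  have d: "d \<noteq> 0" unfolding d_def
    using holomorphic_injective_imp_regular[OF hol open_ball inj] r by simp
  have scale: "((\<lambda>z. a + of_real r * z) has_field_derivative of_real r) (at z)" for z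
    by (auto intro!: derivative_eq_intros)
  have inside: "a + of_real r * z \<in> ball a r" if "z \<in> ball 0 1" for z
    using that r by (simp add: dist_norm norm_mult)
  have h_der: "(h has_field_derivative deriv \<phi> (a + of_real r * z) / d) (at z)"
    if "z \<in> ball 0 1" for z
  proof -
    have "((\<lambda>z. \<phi> (a + of_real r * z)) has_field_derivative deriv \<phi> (a + of_real r * z) * of_real r) (at z)"
      by (rule DERIV_chain2[OF holomorphic_derivI[OF hol open_ball inside[OF that]] scale])
    hence "(h has_field_derivative (deriv \<phi> (a + of_real r * z) * of_real r) / (of_real r * d)) (at z)"
      unfolding h_def d_def[symmetric] using d by (auto intro!: derivative_eq_intros)
    thus ?thesis using r by (simp add: field_simps)
  qed
  show "h holomorphic_on ball 0 1"
    using h_der by (meson field_differentiable_def holomorphic_on_open open_ball)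
  show "inj_on h (ball 0 1)"
  proof (rule inj_onI)
    fix x y assume xy: "x \<in> ball 0 1" "y \<in> ball 0 1" "h x = h y"
    hence "\<phi> (a + of_real r * x) = \<phi> (a + of_real r * y)" using r d by (simp add: h_def d_def field_simps)
    hence "a + of_real r * x = a + of_real r * y" using inj inside xy by (auto dest: inj_onD)
    thus "x = y" using r by simp
  qed
  show "h 0 = 0" by (simp add: h_def)
  show "deriv h 0 = 1" using DERIV_imp_deriv[OF h_der, of 0] d by (simp add: d_def)
  have "deriv (deriv h) 0 = deriv (\<lambda>z. deriv \<phi> (a + of_real r * z) / d) 0"
  proof (rule deriv_cong_ev)
    have "\<forall>\<^sub>F z in nhds 0. z \<in> ball (0::complex) 1" by (intro eventually_nhds_in_open) auto
    thus "\<forall>\<^sub>F z in nhds 0. deriv h z = deriv \<phi> (a + of_real r * z) / d"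
      by eventually_elim (rule DERIV_imp_deriv[OF h_der])
  qed simp
  also have "\<dots> = deriv (deriv \<phi>) a * of_real r / d"
  proof (rule DERIV_imp_deriv)
    have "(deriv \<phi> has_field_derivative deriv (deriv \<phi>) a) (at (a + of_real r * 0))"
      using holomorphic_derivI[OF holomorphic_deriv[OF hol open_ball] open_ball] r by simp
    from DERIV_chain2[OF this scale]
    show "((\<lambda>z. deriv \<phi> (a + of_real r * z) / d) has_field_derivative deriv (deriv \<phi>) a * of_real r / d) (at 0)"
      using d by (auto intro!: derivative_eq_intros)
  qed
  finally show "deriv (deriv h) 0 = of_real r * deriv (deriv \<phi>) a / deriv \<phi> a"
    by (simp add: d_def)
qed

lemma univalent_deriv2_bound:
  obtains C :: real where "C > 0"
    "\<And>\<phi> a r. \<phi> holomorphic_on ball a r \<Longrightarrow> inj_on \<phi> (ball a r) \<Longrightarrow> r > 0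
       \<Longrightarrow> norm (deriv (deriv \<phi>) a) \<le> C * norm (deriv \<phi> a) / r"
proof -
  obtain B where B: "B > 0"
    "\<And>h u. h holomorphic_on ball 0 1 \<Longrightarrow> inj_on h (ball 0 1) \<Longrightarrow> h 0 = 0 \<Longrightarrow> deriv h 0 = 1
       \<Longrightarrow> norm u \<le> 1/2 \<Longrightarrow> norm (h u) \<le> B"
    using univalent_bounded_on_half_disc by blast
  have "norm (deriv (deriv \<phi>) a) \<le> 8 * B * norm (deriv \<phi> a) / r"
    if hol: "\<phi> holomorphic_on ball a r" and inj: "inj_on \<phi> (ball a r)" and r: "r > 0" for \<phi> a r
  proof -
    define h where "h = (\<lambda>z. (\<phi> (a + of_real r * z) - \<phi> a) / (of_real r * deriv \<phi> a))"
    note h = univalent_normalization[OF hol inj r h_def]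
    have "norm ((deriv ^^ 2) h 0) \<le> fact 2 * B / (1/2) ^ 2"
    proof (rule Cauchy_inequality)
      show "h holomorphic_on ball 0 (1/2)" using h(1) by (rule holomorphic_on_subset) auto
      show "continuous_on (cball 0 (1/2)) h"
        by (rule continuous_on_subset[OF holomorphic_on_imp_continuous_on[OF h(1)]]) auto
      show "\<And>x. norm (0 - x) = 1/2 \<Longrightarrow> norm (h x) \<le> B" using B(2)[OF h(1-4)] by simp
    qed simp
    hence "r * norm (deriv (deriv \<phi>) a) / norm (deriv \<phi> a) \<le> 8 * B"
      using h(5) r by (simp add: numeral_2_eq_2 norm_mult norm_divide)
    moreover have "deriv \<phi> a \<noteq> 0"
      using holomorphic_injective_imp_regular[OF hol open_ball inj] r by simp
    ultimately show ?thesis using r by (simp add: field_simps)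
  qed
  thus thesis using that B(1) by (metis zero_less_mult_iff zero_less_numeral)
qed

lemma univalent_halfplane_logderiv_bound:
  fixes \<phi> :: "complex \<Rightarrow> complex" and N :: real
  assumes hol: "\<phi> holomorphic_on {v. Re v > N}" and inj: "inj_on \<phi> {v. Re v > N}"
  obtains C where "C > 0"
    "\<And>v. Re v > N \<Longrightarrow> norm (deriv (deriv \<phi>) v / deriv \<phi> v) \<le> C / (Re v - N)"
proof -
  obtain C where C: "C > 0" "\<And>\<phi> a r. \<phi> holomorphic_on ball a r \<Longrightarrow> inj_on \<phi> (ball a r) \<Longrightarrow> r > 0
      \<Longrightarrow> norm (deriv (deriv \<phi>) a) \<le> C * norm (deriv \<phi> a) / r"
    using univalent_deriv2_bound by blast
  have "norm (deriv (deriv \<phi>) v / deriv \<phi> v) \<le> C / (Re v - N)" if v: "Re v > N" for v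
  proof -
    have sub: "ball v (Re v - N) \<subseteq> {v. Re v > N}"
    proof
      fix u assume "u \<in> ball v (Re v - N)"
      moreover have "Re v - Re u \<le> norm (v - u)" using abs_Re_le_cmod[of "v - u"] by simp
      ultimately show "u \<in> {v. Re v > N}" by (simp add: dist_norm)
    qed
    have "norm (deriv (deriv \<phi>) v) \<le> C * norm (deriv \<phi> v) / (Re v - N)"
      using C(2) holomorphic_on_subset[OF hol sub] inj_on_subset[OF inj sub] v by simp
    moreover have "deriv \<phi> v \<noteq> 0"
      using holomorphic_injective_imp_regular[OF hol open_halfspace_Re_gt inj] v by simp
    ultimately show ?thesis using v by (simp add: norm_divide field_simps)
  qed
  thus thesis using that C(1) by blast
qed

lemma one_le_ln: "exp 1 \<le> x \<Longrightarrow> 1 \<le> ln (x::real)"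
  by (metis exp_gt_zero ln_exp ln_mono order_less_le_trans)

lemma holomorphic_logarithm_with_deriv:
  assumes S: "convex S" "open S" "a \<in> S" and f: "f holomorphic_on S" "\<And>v. v \<in> S \<Longrightarrow> f v \<noteq> 0"
  obtains l where "l holomorphic_on S" "\<And>v. v \<in> S \<Longrightarrow> exp (l v) = f v"
    "\<And>v. v \<in> S \<Longrightarrow> (l has_field_derivative deriv f v / f v) (at v)"
proof -
  obtain l where l: "l holomorphic_on S" "\<And>v. v \<in> S \<Longrightarrow> exp (l v) = f v"
    using holomorphic_logarithm_exists[OF S(1,2) f S(3)] by blast
  have "(l has_field_derivative deriv f v / f v) (at v)" if v: "v \<in> S" for v
  proof -
    have l': "(l has_field_derivative deriv l v) (at v)" using holomorphic_derivI[OF l(1) S(2) v] .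
    have "((\<lambda>v. exp (l v)) has_field_derivative f v * deriv l v) (at v)"
      using DERIV_chain2[OF DERIV_exp l'] l(2)[OF v] by simp
    hence "(f has_field_derivative f v * deriv l v) (at v)"
      by (rule has_field_derivative_transform_within_open[OF _ S(2) v]) (rule l(2))
    hence "deriv f v = f v * deriv l v" by (rule DERIV_imp_deriv)
    thus ?thesis using l' f(2)[OF v] by simp
  qed
  with l that show thesis by blast
qed

lemma continuous_logs_differ_by_constant:
  fixes L l :: "'a::topological_space \<Rightarrow> complex"
  assumes S: "connected S" and cont: "continuous_on S L" "continuous_on S l"
    and exp_eq: "\<And>x. x \<in> S \<Longrightarrow> exp (L x) = exp (l x)"
  obtains c where "\<And>x. x \<in> S \<Longrightarrow> L x = l x + c"
proof -
  have "(\<lambda>x. L x - l x) constant_on S"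
  proof (rule continuous_discrete_range_constant[OF S])
    show "continuous_on S (\<lambda>x. L x - l x)" using cont by (intro continuous_intros)
    fix x assume x: "x \<in> S"
    show "\<exists>e>0. \<forall>y. y \<in> S \<and> L y - l y \<noteq> L x - l x \<longrightarrow> e \<le> norm (L y - l y - (L x - l x))"
    proof (intro exI[of _ "2 * pi"] conjI allI impI)
      fix y assume y: "y \<in> S \<and> L y - l y \<noteq> L x - l x"
      show "2 * pi \<le> norm (L y - l y - (L x - l x))"
      proof (rule ccontr)
        assume "\<not> 2 * pi \<le> norm (L y - l y - (L x - l x))"
        hence "\<bar>Im (L y - l y) - Im (L x - l x)\<bar> < 2 * pi"
          using abs_Im_le_cmod[of "L y - l y - (L x - l x)"] by simp
        moreover have "exp (L y - l y) = exp (L x - l x)"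
          using exp_eq x y by (simp add: exp_diff)
        ultimately have "L y - l y = L x - l x" by (rule exp_complex_eqI)
        with y show False by blast
      qed
    qed simp
  qed
  then obtain c where "\<And>x. x \<in> S \<Longrightarrow> L x - l x = c" unfolding constant_on_def by blast
  with that show thesis by (metis add.commute diff_add_cancel)
qed

lemma abs_ln_norm_inverse_exp_power:
  fixes l q :: complex
  assumes q: "norm q \<le> 1/2"
  shows "\<bar>ln (norm (inverse (exp l) ^ k * (1 + q)))\<bar> \<le> 1 + real k * norm l"
proof -
  have lower: "1/2 \<le> norm (1 + q)" using norm_triangle_ineq4[of "1 + q" q] q by simp
  have upper: "norm (1 + q) \<le> 3/2" using norm_triangle_ineq[of 1 q] q by simp
  have ln_1q: "\<bar>ln (norm (1 + q))\<bar> \<le> 1"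
  proof -
    have "ln (norm (1 + q)) \<ge> - 1"
      using ln_mono[of "1/2" "norm (1 + q)"] lower ln_2_less_1 by (simp add: ln_div)
    moreover have "ln (norm (1 + q)) \<le> norm (1 + q) - 1"
      using lower by (intro ln_le_minus_one) auto
    ultimately show ?thesis using upper by (simp add: abs_le_iff)
  qed
  have "norm (inverse (exp l) ^ k) = exp (- (real k * Re l))"
    by (simp add: norm_power norm_inverse exp_minus exp_of_nat_mult power_inverse)
  moreover have "1 + q \<noteq> 0" using lower by auto
  ultimately have "ln (norm (inverse (exp l) ^ k * (1 + q))) = ln (norm (1 + q)) - real k * Re l"
    by (simp add: norm_mult ln_mult)
  moreover have "\<bar>real k * Re l\<bar> \<le> real k * norm l"
    using abs_Re_le_cmod[of l] by (simp add: abs_mult mult_left_mono)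
  ultimately show ?thesis
    using ln_1q abs_triangle_ineq4[of "ln (norm (1 + q))" "real k * Re l"] by linarith
qed

lemma univalent_halfplane_log_deriv:
  fixes \<phi> :: "complex \<Rightarrow> complex" and N :: real
  assumes hol: "\<phi> holomorphic_on {v. Re v > N}" and inj: "inj_on \<phi> {v. Re v > N}"
  obtains l where "l holomorphic_on {v. Re v > N}" "\<And>v. Re v > N \<Longrightarrow> exp (l v) = deriv \<phi> v"
    "\<And>v. Re v > N \<Longrightarrow> (l has_field_derivative deriv (deriv \<phi>) v / deriv \<phi> v) (at v)"
proof (rule holomorphic_logarithm_with_deriv)
  show "deriv \<phi> holomorphic_on {v. Re v > N}"
    using hol open_halfspace_Re_gt by (rule holomorphic_deriv)
  show "deriv \<phi> v \<noteq> 0" if "v \<in> {v. Re v > N}" for v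
    using holomorphic_injective_imp_regular[OF hol open_halfspace_Re_gt inj that] .
  show "of_real (N + 1) \<in> {v. Re v > N}" by simp
qed (auto intro: convex_halfspace_Re_gt open_halfspace_Re_gt that)

lemma sector_memE:
  assumes "v \<in> sector v0 k"
  obtains t \<theta> where "t \<ge> 0" "cos \<theta> \<ge> 1/2" "v = of_real v0 + of_real t * exp (\<i> * of_real \<theta>)"
proof -
  obtain t \<theta> where t\<theta>: "v = of_real v0 + of_real t * exp (\<i> * of_real \<theta>)" "t \<ge> 0"
      "- pi / 2 ^ (k + 2) \<le> \<theta>" "\<theta> \<le> pi / 2 ^ (k + 2)"
    using assms unfolding sector_def by blast
  have "(2::real) ^ 2 \<le> 2 ^ (k + 2)" by (intro power_increasing) auto
  hence "pi / 2 ^ (k + 2) \<le> pi / 4" by (intro divide_left_mono) auto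
  hence "\<bar>\<theta>\<bar> \<le> pi / 3" using t\<theta>(3,4) pi_gt_zero by (simp add: abs_le_iff)
  hence "cos (pi / 3) \<le> cos \<bar>\<theta>\<bar>" by (intro cos_monotone_0_pi_le) auto
  hence "cos \<theta> \<ge> 1/2" by (simp add: cos_60)
  with t\<theta> that show thesis by blast
qed

lemma ray_Re_ge:
  assumes "t \<ge> 0" "cos \<theta> \<ge> 1/2"
  shows "Re (of_real v0 + of_real t * exp (\<i> * of_real \<theta>)) \<ge> v0 + t / 2"
proof -
  have "t * cos \<theta> \<ge> t * (1/2)" using assms by (intro mult_left_mono) auto
  thus ?thesis by (simp add: Re_exp)
qed

lemma ray_norm_le:
  assumes "t \<ge> 0" "v0 \<ge> 0"
  shows "norm (of_real v0 + of_real t * exp (\<i> * of_real \<theta>)) \<le> v0 + t"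
  using norm_triangle_ineq[of "of_real v0" "of_real t * exp (\<i> * of_real \<theta>)"] assms
  by (simp add: norm_mult)

lemma sector_Re_bounds:
  assumes "v \<in> sector v0 k" "v0 \<ge> 0"
  shows "Re v \<ge> v0" "norm v \<le> 2 * Re v"
proof -
  obtain t \<theta> where t\<theta>: "t \<ge> 0" "cos \<theta> \<ge> 1/2" "v = of_real v0 + of_real t * exp (\<i> * of_real \<theta>)"
    using sector_memE[OF assms(1)] by blast
  have "Re v \<ge> v0 + t / 2" "norm v \<le> v0 + t"
    unfolding t\<theta>(3) using ray_Re_ge[OF t\<theta>(1,2)] ray_norm_le[OF t\<theta>(1) assms(2)] by auto
  thus "Re v \<ge> v0" "norm v \<le> 2 * Re v" using t\<theta>(1) assms(2) by linarith+
qed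

lemma sector_Re_ge_of_norm_ge:
  assumes "v \<in> sector v0 k" "v0 \<ge> 0" "norm v \<ge> 2 * R"
  shows "Re v \<ge> R"
  using sector_Re_bounds[OF assms(1,2)] assms(3) by linarith

lemma starlike_sector: "starlike (sector v0 k)"
  unfolding starlike_def
proof (intro bexI ballI)
  show "of_real v0 \<in> sector v0 k" unfolding sector_def
    by (intro CollectI exI[of _ 0]) auto
  fix x assume "x \<in> sector v0 k"
  then obtain t \<theta> where t\<theta>: "x = of_real v0 + of_real t * exp (\<i> * of_real \<theta>)" "t \<ge> 0"
      "- pi / 2 ^ (k + 2) \<le> \<theta>" "\<theta> \<le> pi / 2 ^ (k + 2)"
    unfolding sector_def by blast
  show "closed_segment (of_real v0) x \<subseteq> sector v0 k"
  proof
    fix y assume "y \<in> closed_segment (of_real v0) x"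
    then obtain u where u: "0 \<le> u" "u \<le> 1" "y = (1 - u) *\<^sub>R of_real v0 + u *\<^sub>R x"
      unfolding in_segment by blast
    have "y = of_real v0 + of_real (u * t) * exp (\<i> * of_real \<theta>)"
      using u(3) t\<theta>(1) by (simp add: scaleR_conv_of_real algebra_simps)
    thus "y \<in> sector v0 k" unfolding sector_def using t\<theta> u
      by (intro CollectI exI[of _ "u * t"] exI[of _ \<theta>] conjI) auto
  qed
qed

(* Parametrise the ray by v = v0 + e^(i theta) (e^s - 1): the factor e^s from the chain rule
   cancels against C / (Re v - N) <= 2 C e^-s, so the growth is linear in s = ln (1 + t). *)
lemma halfplane_ray_growth:
  fixes l \<psi> :: "complex \<Rightarrow> complex" and N C v0 t \<theta> :: real
  assumes der: "\<And>v. Re v > N \<Longrightarrow> (l has_field_derivative \<psi> v) (at v)"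
    and bnd: "\<And>v. Re v > N \<Longrightarrow> norm (\<psi> v) \<le> C / (Re v - N)"
    and C: "C \<ge> 0" and v0: "v0 \<ge> N + 1" and t: "t \<ge> 0" and \<theta>: "cos \<theta> \<ge> 1/2"
  shows "norm (l (of_real v0 + of_real t * exp (\<i> * of_real \<theta>)) - l (of_real v0)) \<le> 2 * C * ln (1 + t)"
proof -
  define e where "e = exp (\<i> * of_real \<theta>)"
  define \<gamma> where "\<gamma> s = of_real v0 + e * (exp s - 1)" for s :: complex
  define T where "T = ln (1 + t)"
  have T: "T \<ge> 0" using t by (simp add: T_def)
  define S where "S = closed_segment 0 (complex_of_real T)"
  have S_real: "\<exists>\<sigma>. s = of_real \<sigma> \<and> 0 \<le> \<sigma>" if s: "s \<in> S" for s
  proof -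
    obtain u where u: "0 \<le> u" "u \<le> 1" "s = (1 - u) *\<^sub>R 0 + u *\<^sub>R complex_of_real T"
      using s unfolding S_def in_segment by blast
    show ?thesis using u T by (intro exI[of _ "u * T"]) (auto simp: scaleR_conv_of_real)
  qed
  have \<gamma>_real: "\<gamma> (of_real \<sigma>) = of_real v0 + of_real (exp \<sigma> - 1) * e" for \<sigma>
    by (simp add: \<gamma>_def exp_of_real mult.commute)
  have Re_\<gamma>: "Re (\<gamma> (of_real \<sigma>)) - N \<ge> exp \<sigma> / 2" if "\<sigma> \<ge> 0" for \<sigma>
  proof -
    have "Re (\<gamma> (of_real \<sigma>)) \<ge> v0 + (exp \<sigma> - 1) / 2"
      unfolding \<gamma>_real e_def using that \<theta> by (intro ray_Re_ge) auto
    thus ?thesis using v0 by (simp add: diff_divide_distrib)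
  qed
  have \<gamma>_der: "((l \<circ> \<gamma>) has_field_derivative \<psi> (\<gamma> s) * (e * exp s)) (at s within S)"
    and \<gamma>_bnd: "norm (\<psi> (\<gamma> s) * (e * exp s)) \<le> 2 * C" if s: "s \<in> S" for s
  proof -
    obtain \<sigma> where \<sigma>: "s = of_real \<sigma>" "0 \<le> \<sigma>" using S_real[OF s] by blast
    have pos: "Re (\<gamma> s) - N \<ge> exp \<sigma> / 2" using Re_\<gamma>[OF \<sigma>(2)] \<sigma>(1) by simp
    hence in_H: "Re (\<gamma> s) > N" using exp_gt_zero[of \<sigma>] by linarith
    have "(\<gamma> has_field_derivative e * exp s) (at s)" unfolding \<gamma>_def
      by (auto intro!: derivative_eq_intros)
    from DERIV_chain[OF der[OF in_H] this]
    show "((l \<circ> \<gamma>) has_field_derivative \<psi> (\<gamma> s) * (e * exp s)) (at s within S)"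
      by (rule has_field_derivative_at_within)
    have "norm e = 1" "norm (exp s) = exp \<sigma>" using \<sigma>(1) by (simp_all add: e_def)
    hence "norm (\<psi> (\<gamma> s) * (e * exp s)) = norm (\<psi> (\<gamma> s)) * exp \<sigma>"
      by (simp add: norm_mult del: norm_exp_eq_Re)
    also have "\<dots> \<le> C / (Re (\<gamma> s) - N) * exp \<sigma>"
      using bnd[OF in_H] by (intro mult_right_mono) auto
    also have "\<dots> \<le> C / (exp \<sigma> / 2) * exp \<sigma>"
      using pos C in_H by (intro mult_right_mono divide_left_mono) auto
    finally show "norm (\<psi> (\<gamma> s) * (e * exp s)) \<le> 2 * C" by simp
  qed
  have "norm ((l \<circ> \<gamma>) (of_real T) - (l \<circ> \<gamma>) 0) \<le> 2 * C * norm (complex_of_real T - 0)"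
    by (rule field_differentiable_bound[OF _ \<gamma>_der \<gamma>_bnd]) (auto simp: S_def)
  moreover have "\<gamma> (of_real T) = of_real v0 + of_real t * e"
    using \<gamma>_real[of T] t by (simp add: T_def)
  ultimately show ?thesis using T by (simp add: \<gamma>_def e_def T_def mult.commute)
qed

lemma sector_log_growth:
  fixes l \<psi> :: "complex \<Rightarrow> complex" and N C v0 :: real
  assumes der: "\<And>v. Re v > N \<Longrightarrow> (l has_field_derivative \<psi> v) (at v)"
    and bnd: "\<And>v. Re v > N \<Longrightarrow> norm (\<psi> v) \<le> C / (Re v - N)"
    and C: "C \<ge> 0" and v0: "v0 \<ge> 1" "v0 \<ge> N + 1"
  obtains B where "B > 0" "\<And>k v. v \<in> sector v0 k \<Longrightarrow> Re v \<ge> exp 1 \<Longrightarrow> norm (l v) \<le> B * ln (Re v)"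
proof
  show "norm (l (of_real v0)) + 4 * C + 1 > 0" using C by (simp add: add_nonneg_pos)
  fix k v assume v: "v \<in> sector v0 k" and Re_v: "Re v \<ge> exp 1"
  obtain t \<theta> where t\<theta>: "t \<ge> 0" "cos \<theta> \<ge> 1/2" "v = of_real v0 + of_real t * exp (\<i> * of_real \<theta>)"
    using sector_memE[OF v] by blast
  have "Re v \<ge> v0 + t / 2" unfolding t\<theta>(3) using t\<theta>(1,2) by (rule ray_Re_ge)
  have ln_Re: "ln (Re v) \<ge> 1" using Re_v by (rule one_le_ln)
  have "ln (1 + t) \<le> ln (2 * Re v)"
    using \<open>Re v \<ge> v0 + t / 2\<close> v0 t\<theta>(1) by (intro ln_mono) auto
  also have "\<dots> = ln 2 + ln (Re v)" using Re_v by (subst ln_mult) (auto intro: less_le_trans[OF exp_gt_zero])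
  also have "\<dots> \<le> 2 * ln (Re v)" using ln_2_less_1 ln_Re by simp
  finally have "2 * C * ln (1 + t) \<le> 2 * C * (2 * ln (Re v))" using C by (intro mult_left_mono) auto
  hence "norm (l v - l (of_real v0)) \<le> 4 * C * ln (Re v)"
    using halfplane_ray_growth[OF der bnd C v0(2) t\<theta>(1,2)] t\<theta>(3) by simp
  moreover have "norm (l v) \<le> norm (l (of_real v0)) + norm (l v - l (of_real v0))"
    by (metis add.commute diff_add_cancel norm_triangle_ineq)
  moreover have "norm (l (of_real v0)) + 4 * C * ln (Re v) \<le> (norm (l (of_real v0)) + 4 * C + 1) * ln (Re v)"
    using ln_Re mult_left_mono[OF ln_Re, of "norm (l (of_real v0))"] by (simp add: algebra_simps)
  ultimately show "norm (l v) \<le> (norm (l (of_real v0)) + 4 * C + 1) * ln (Re v)" by linarith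
qed

lemma sector_log_branch_growth:
  fixes l L :: "complex \<Rightarrow> complex"
  assumes v0: "v0 \<ge> 0" and l: "continuous_on (sector v0 k) l"
    and B: "B > 0" "\<And>v. v \<in> sector v0 k \<Longrightarrow> Re v \<ge> exp 1 \<Longrightarrow> norm (l v) \<le> B * ln (Re v)"
    and L: "continuous_on (sector v0 k) L" "\<And>v. v \<in> sector v0 k \<Longrightarrow> exp (L v) = exp (l v)"
  shows "\<exists>d>0. \<exists>R. \<forall>v\<in>sector v0 k. norm v \<ge> R \<longrightarrow> norm (L v) \<le> d * ln (Re v)"
proof -
  obtain c where c: "\<And>v. v \<in> sector v0 k \<Longrightarrow> L v = l v + c"
    using continuous_logs_differ_by_constant[OF starlike_imp_connected[OF starlike_sector] L(1) l L(2)]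
    by blast
  show ?thesis
  proof (rule exI[of _ "norm c + B"], intro conjI exI[of _ "2 * exp 1"] ballI impI)
    show "norm c + B > 0" using B(1) by (simp add: add_nonneg_pos)
    fix v assume v: "v \<in> sector v0 k" "norm v \<ge> 2 * exp 1"
    hence Re_v: "Re v \<ge> exp 1" by (rule sector_Re_ge_of_norm_ge[OF _ v0])
    hence ln_Re_v: "ln (Re v) \<ge> 1" by (rule one_le_ln)
    have "norm (L v) \<le> norm c + B * ln (Re v)"
      using c[OF v(1)] B(2)[OF v(1) Re_v] norm_triangle_ineq[of "l v" c] by simp
    also have "\<dots> \<le> (norm c + B) * ln (Re v)"
      using mult_left_mono[OF ln_Re_v, of "norm c"] by (simp add: algebra_simps)
    finally show "norm (L v) \<le> (norm c + B) * ln (Re v)" .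
  qed
qed

section \<open>Functions of order 1/(Re v - N) on a half-plane\<close>

definition halfplane_decay :: "real \<Rightarrow> (complex \<Rightarrow> complex) \<Rightarrow> bool" where
  "halfplane_decay N Q \<longleftrightarrow> Q holomorphic_on {v. Re v > N} \<and>
     (\<exists>K \<tau>. K \<ge> 0 \<and> \<tau> \<ge> 1 \<and> (\<forall>v. Re v - N \<ge> \<tau> \<longrightarrow> norm (Q v) \<le> K / (Re v - N)))"

lemma halfplane_decayI:
  assumes "Q holomorphic_on {v. Re v > N}" "K \<ge> 0" "\<tau> \<ge> 1"
    "\<And>v. Re v - N \<ge> \<tau> \<Longrightarrow> norm (Q v) \<le> K / (Re v - N)"
  shows "halfplane_decay N Q"
  using assms unfolding halfplane_decay_def by blast

lemma halfplane_decayE: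
  assumes "halfplane_decay N Q"
  obtains K \<tau> where "Q holomorphic_on {v. Re v > N}" "K \<ge> 0" "\<tau> \<ge> 1"
    "\<And>v. Re v - N \<ge> \<tau> \<Longrightarrow> norm (Q v) \<le> K / (Re v - N)"
  using assms unfolding halfplane_decay_def by blast

lemma halfplane_decay_zero: "halfplane_decay N (\<lambda>v. 0)"
  by (rule halfplane_decayI[of _ _ 0 1]) auto

lemma halfplane_decay_add:
  assumes "halfplane_decay N P" "halfplane_decay N Q"
  shows "halfplane_decay N (\<lambda>v. P v + Q v)"
proof -
  obtain K1 \<tau>1 where P: "P holomorphic_on {v. Re v > N}" "K1 \<ge> 0" "\<tau>1 \<ge> 1"
      "\<And>v. Re v - N \<ge> \<tau>1 \<Longrightarrow> norm (P v) \<le> K1 / (Re v - N)"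
    using halfplane_decayE[OF assms(1)] by blast
  obtain K2 \<tau>2 where Q: "Q holomorphic_on {v. Re v > N}" "K2 \<ge> 0" "\<tau>2 \<ge> 1"
      "\<And>v. Re v - N \<ge> \<tau>2 \<Longrightarrow> norm (Q v) \<le> K2 / (Re v - N)"
    using halfplane_decayE[OF assms(2)] by blast
  show ?thesis
  proof (rule halfplane_decayI[of _ _ "K1 + K2" "max \<tau>1 \<tau>2"])
    show "(\<lambda>v. P v + Q v) holomorphic_on {v. Re v > N}"
      using P(1) Q(1) by (intro holomorphic_intros)
    fix v assume v: "Re v - N \<ge> max \<tau>1 \<tau>2"
    have "norm (P v + Q v) \<le> K1 / (Re v - N) + K2 / (Re v - N)"
      using P(4) Q(4) v norm_triangle_ineq[of "P v" "Q v"] by force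
    thus "norm (P v + Q v) \<le> (K1 + K2) / (Re v - N)" by (simp add: add_divide_distrib)
  qed (use P Q in auto)
qed

lemma halfplane_decay_cmult:
  assumes "halfplane_decay N Q"
  shows "halfplane_decay N (\<lambda>v. c * Q v)"
proof -
  obtain K \<tau> where Q: "Q holomorphic_on {v. Re v > N}" "K \<ge> 0" "\<tau> \<ge> 1"
      "\<And>v. Re v - N \<ge> \<tau> \<Longrightarrow> norm (Q v) \<le> K / (Re v - N)"
    using halfplane_decayE[OF assms] by blast
  show ?thesis
  proof (rule halfplane_decayI[of _ _ "norm c * K" \<tau>])
    show "(\<lambda>v. c * Q v) holomorphic_on {v. Re v > N}"
      using Q(1) by (intro holomorphic_intros)
    fix v assume "Re v - N \<ge> \<tau>"
    hence "norm c * norm (Q v) \<le> norm c * (K / (Re v - N))"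
      using Q(4) by (intro mult_left_mono) auto
    thus "norm (c * Q v) \<le> norm c * K / (Re v - N)" by (simp add: norm_mult)
  qed (use Q in auto)
qed

lemma halfplane_decay_mult:
  assumes "halfplane_decay N P" "halfplane_decay N Q"
  shows "halfplane_decay N (\<lambda>v. P v * Q v)"
proof -
  obtain K1 \<tau>1 where P: "P holomorphic_on {v. Re v > N}" "K1 \<ge> 0" "\<tau>1 \<ge> 1"
      "\<And>v. Re v - N \<ge> \<tau>1 \<Longrightarrow> norm (P v) \<le> K1 / (Re v - N)"
    using halfplane_decayE[OF assms(1)] by blast
  obtain K2 \<tau>2 where Q: "Q holomorphic_on {v. Re v > N}" "K2 \<ge> 0" "\<tau>2 \<ge> 1"
      "\<And>v. Re v - N \<ge> \<tau>2 \<Longrightarrow> norm (Q v) \<le> K2 / (Re v - N)"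
    using halfplane_decayE[OF assms(2)] by blast
  show ?thesis
  proof (rule halfplane_decayI[of _ _ "K1 * K2" "max \<tau>1 \<tau>2"])
    show "(\<lambda>v. P v * Q v) holomorphic_on {v. Re v > N}"
      using P(1) Q(1) by (intro holomorphic_intros)
    fix v assume v: "Re v - N \<ge> max \<tau>1 \<tau>2"
    define \<rho> where "\<rho> = Re v - N"
    have \<rho>: "\<rho> \<ge> 1" using v P(3) unfolding \<rho>_def by simp
    have "norm (P v * Q v) \<le> (K1 / \<rho>) * (K2 / \<rho>)"
      unfolding norm_mult \<rho>_def using P Q v by (intro mult_mono) auto
    also have "\<dots> = (K1 * K2 / \<rho>) / \<rho>" by simp
    also have "\<dots> \<le> (K1 * K2 / \<rho>) / 1"
      using \<rho> P(2) Q(2) by (intro divide_left_mono) auto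
    finally show "norm (P v * Q v) \<le> K1 * K2 / (Re v - N)" by (simp add: \<rho>_def)
  qed (use P Q in auto)
qed

lemma halfplane_decay_deriv:
  assumes "halfplane_decay N Q"
  shows "halfplane_decay N (deriv Q)"
proof -
  obtain K \<tau> where Q: "Q holomorphic_on {v. Re v > N}" "K \<ge> 0" "\<tau> \<ge> 1"
      "\<And>v. Re v - N \<ge> \<tau> \<Longrightarrow> norm (Q v) \<le> K / (Re v - N)"
    using halfplane_decayE[OF assms] by blast
  show ?thesis
  proof (rule halfplane_decayI[of _ _ "4 * K" "2 * \<tau>"])
    show "deriv Q holomorphic_on {v. Re v > N}"
      using Q(1) by (intro holomorphic_deriv) (auto simp: open_halfspace_Re_gt)
    fix v assume v: "Re v - N \<ge> 2 * \<tau>"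
    define \<rho> where "\<rho> = Re v - N"
    have \<rho>: "\<rho> \<ge> 2" using v Q(3) unfolding \<rho>_def by simp
    have near: "Re u - N \<ge> \<rho> / 2" if "norm (v - u) \<le> \<rho> / 2" for u
      using that abs_Re_le_cmod[of "v - u"] unfolding \<rho>_def by simp
    have disc: "cball v (\<rho> / 2) \<subseteq> {v. Re v > N}"
      using near \<rho> by (force simp: dist_norm)
    have "norm ((deriv ^^ 1) Q v) \<le> fact 1 * (2 * K / \<rho>) / (\<rho> / 2) ^ 1"
    proof (rule Cauchy_inequality)
      show "Q holomorphic_on ball v (\<rho> / 2)"
        using Q(1) disc ball_subset_cball holomorphic_on_subset by blast
      show "continuous_on (cball v (\<rho> / 2)) Q"
        using holomorphic_on_imp_continuous_on[OF Q(1)] disc continuous_on_subset by blast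
      fix u assume "norm (v - u) = \<rho> / 2"
      hence u: "Re u - N \<ge> \<rho> / 2" using near by simp
      hence "norm (Q u) \<le> K / (Re u - N)" using Q(4) v unfolding \<rho>_def by simp
      also have "\<dots> \<le> K / (\<rho> / 2)" using u \<rho> Q(2) by (intro divide_left_mono) auto
      finally show "norm (Q u) \<le> 2 * K / \<rho>" by (simp add: mult.commute)
    qed (use \<rho> in simp)
    hence "norm (deriv Q v) \<le> (4 * K / \<rho>) / \<rho>" by simp
    also have "\<dots> \<le> (4 * K / \<rho>) / 1"
      using \<rho> Q(2) by (intro divide_left_mono) auto
    finally show "norm (deriv Q v) \<le> 4 * K / (Re v - N)" by (simp add: \<rho>_def)
  qed (use Q in auto)
qed

lemma halfplane_decay_small:
  assumes "halfplane_decay N Q" "\<epsilon> > 0"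
  obtains R where "\<And>v. Re v \<ge> R \<Longrightarrow> norm (Q v) \<le> \<epsilon>"
proof -
  obtain K \<tau> where Q: "K \<ge> 0" "\<tau> \<ge> 1" "\<And>v. Re v - N \<ge> \<tau> \<Longrightarrow> norm (Q v) \<le> K / (Re v - N)"
    using assms(1) unfolding halfplane_decay_def by blast
  show thesis
  proof (rule that)
    fix v assume v: "Re v \<ge> N + \<tau> + K / \<epsilon>"
    have "K / \<epsilon> \<ge> 0" using Q(1) assms(2) by simp
    hence pos: "Re v - N \<ge> \<tau>" "Re v - N > 0" "K / \<epsilon> \<le> Re v - N" using v Q(2) by linarith+
    have "K / (Re v - N) \<le> \<epsilon>"
      using pos(2,3) assms(2) by (simp add: divide_le_eq pos_divide_le_eq mult.commute)
    thus "norm (Q v) \<le> \<epsilon>" using Q(3)[OF pos(1)] by linarith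
  qed
qed

section \<open>Higher derivatives of exp composed with an inverse\<close>

(* With psi = phi''/phi', deriv_error psi k is the correction term Q_k in
   f^(k)(phi v) / f(phi v) = phi'(v)^-k (1 + Q_k v). *)
fun deriv_error :: "(complex \<Rightarrow> complex) \<Rightarrow> nat \<Rightarrow> complex \<Rightarrow> complex" where
  "deriv_error \<psi> 0 = (\<lambda>v. 0)"
| "deriv_error \<psi> (Suc k) =
     (\<lambda>v. deriv_error \<psi> k v + deriv (deriv_error \<psi> k) v - of_nat k * \<psi> v * (1 + deriv_error \<psi> k v))"

lemma halfplane_decay_deriv_error:
  assumes "halfplane_decay N \<psi>"
  shows "halfplane_decay N (deriv_error \<psi> k)"
proof (induction k)
  case 0
  thus ?case by (simp add: halfplane_decay_zero)
next
  case (Suc k)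
  let ?Q = "deriv_error \<psi> k"
  have "deriv_error \<psi> (Suc k) = (\<lambda>v. (?Q v + deriv ?Q v) + (- of_nat k) * (\<psi> v + \<psi> v * ?Q v))"
    by (auto simp: algebra_simps)
  thus ?case
    by (simp only:) (intro halfplane_decay_add halfplane_decay_cmult halfplane_decay_mult
        halfplane_decay_deriv Suc assms)
qed

lemma has_field_derivative_right_inverse:
  assumes U: "open U" "z \<in> U" and g: "g holomorphic_on U" "g ` U \<subseteq> H"
    and H: "open H" and \<phi>: "\<phi> holomorphic_on H" "deriv \<phi> (g z) \<noteq> 0"
    and \<phi>_g: "\<And>z. z \<in> U \<Longrightarrow> \<phi> (g z) = z"
  shows "(g has_field_derivative inverse (deriv \<phi> (g z))) (at z)"
proof -
  have g': "(g has_field_derivative deriv g z) (at z)"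
    using holomorphic_derivI[OF g(1) U] .
  have "(\<phi> has_field_derivative deriv \<phi> (g z)) (at (g z))"
    using holomorphic_derivI[OF \<phi>(1) H] g(2) U(2) by blast
  from DERIV_chain2[OF this g']
  have "((\<lambda>z. \<phi> (g z)) has_field_derivative deriv \<phi> (g z) * deriv g z) (at z)" .
  moreover have "((\<lambda>z. \<phi> (g z)) has_field_derivative 1) (at z)"
    by (rule has_field_derivative_transform_within_open[OF DERIV_ident U]) (simp add: \<phi>_g)
  ultimately have "deriv \<phi> (g z) * deriv g z = 1" by (rule DERIV_unique)
  hence "deriv g z = inverse (deriv \<phi> (g z))" using \<phi>(2) by (simp add: field_simps)
  with g' show ?thesis by simp
qed

lemma has_field_derivative_inverse_deriv_right_inverse:
  assumes U: "open U" "z \<in> U" and g: "g holomorphic_on U" "g ` U \<subseteq> H"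
    and H: "open H" and \<phi>: "\<phi> holomorphic_on H" "deriv \<phi> (g z) \<noteq> 0"
    and \<phi>_g: "\<And>z. z \<in> U \<Longrightarrow> \<phi> (g z) = z"
  shows "((\<lambda>z. inverse (deriv \<phi> (g z))) has_field_derivative
      - (deriv (deriv \<phi>) (g z) / deriv \<phi> (g z)) * inverse (deriv \<phi> (g z)) * inverse (deriv \<phi> (g z)))
      (at z)"
proof -
  have "(deriv \<phi> has_field_derivative deriv (deriv \<phi>) (g z)) (at (g z))"
    using holomorphic_derivI[OF holomorphic_deriv[OF \<phi>(1) H] H] g(2) U(2) by blast
  from DERIV_inverse_fun[OF DERIV_chain2[OF this has_field_derivative_right_inverse[OF assms]] \<phi>(2)]
  show ?thesis by (simp add: field_simps power2_eq_square)
qed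

lemma holomorphic_deriv_error:
  assumes "\<psi> holomorphic_on S" "open S"
  shows "deriv_error \<psi> k holomorphic_on S"
  by (induction k) (use assms in \<open>auto intro!: holomorphic_intros holomorphic_deriv\<close>)

lemma has_field_derivative_deriv_error_step:
  assumes E: "(E has_field_derivative E z * W z) (at z)"
    and W: "(W has_field_derivative - p * W z * W z) (at z)"
    and Q: "(Q has_field_derivative q * W z) (at z)"
  shows "((\<lambda>z. E z * W z ^ k * (1 + Q z)) has_field_derivative
      E z * W z ^ Suc k * (1 + Q z + q - of_nat k * p * (1 + Q z))) (at z)"
proof -
  have "((\<lambda>z. W z ^ k) has_field_derivative - of_nat k * p * W z ^ Suc k) (at z)"
    using DERIV_power[OF W, of k] by (cases k) (simp_all add: algebra_simps)
  from DERIV_mult[OF DERIV_mult[OF E this] DERIV_add[OF DERIV_const Q]]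
  show ?thesis by (rule DERIV_cong) (simp add: algebra_simps)
qed

lemma higher_deriv_exp_right_inverse:
  fixes f g \<phi> :: "complex \<Rightarrow> complex" and N :: real
  assumes U: "open U" and g_hol: "g holomorphic_on U" and g_U: "\<And>z. z \<in> U \<Longrightarrow> Re (g z) > N"
    and \<phi>_hol: "\<phi> holomorphic_on {v. Re v > N}" and \<phi>'_nz: "\<And>v. Re v > N \<Longrightarrow> deriv \<phi> v \<noteq> 0"
    and \<phi>_g: "\<And>z. z \<in> U \<Longrightarrow> \<phi> (g z) = z" and f: "\<And>z. z \<in> U \<Longrightarrow> f z = exp (g z)"
    and z: "z \<in> U"
  shows "(deriv ^^ k) f z
    = f z * inverse (deriv \<phi> (g z)) ^ k * (1 + deriv_error (\<lambda>v. deriv (deriv \<phi>) v / deriv \<phi> v) k (g z))"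
proof -
  define H where "H = {v. Re v > N}"
  define \<psi> where "\<psi> v = deriv (deriv \<phi>) v / deriv \<phi> v" for v
  define W where "W z = inverse (deriv \<phi> (g z))" for z
  have H: "open H" by (simp add: H_def open_halfspace_Re_gt)
  have \<psi>_hol: "\<psi> holomorphic_on H"
    unfolding \<psi>_def using \<phi>_hol \<phi>'_nz H by (intro holomorphic_intros holomorphic_deriv) (auto simp: H_def)
  have g_der: "(g has_field_derivative W z) (at z)" if "z \<in> U" for z
    unfolding W_def using that g_U \<phi>'_nz
    by (intro has_field_derivative_right_inverse[OF U(1) _ g_hol _ H \<phi>_hol[folded H_def]] \<phi>_g)
      (auto simp: H_def)
  have W_der: "(W has_field_derivative - \<psi> (g z) * W z * W z) (at z)" if "z \<in> U" for z
    unfolding W_def \<psi>_def using that g_U \<phi>'_nz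
    by (intro has_field_derivative_inverse_deriv_right_inverse[OF U(1) _ g_hol _ H \<phi>_hol[folded H_def]] \<phi>_g)
      (auto simp: H_def)
  have "\<forall>z\<in>U. (deriv ^^ k) f z = exp (g z) * W z ^ k * (1 + deriv_error \<psi> k (g z))"
  proof (induction k)
    case 0
    thus ?case using f by simp
  next
    case (Suc k)
    show ?case
    proof
      fix z assume z: "z \<in> U"
      define Q where "Q = deriv_error \<psi> k"
      have Q_der: "(Q has_field_derivative deriv Q (g z)) (at (g z))"
        using holomorphic_derivI[OF holomorphic_deriv_error[OF \<psi>_hol H] H] g_U[OF z]
        unfolding Q_def H_def by simp
      have exp_der: "((\<lambda>z. exp (g z)) has_field_derivative exp (g z) * W z) (at z)"
        using DERIV_chain2[OF DERIV_exp g_der[OF z]] .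
      have Q_g_der: "((\<lambda>z. Q (g z)) has_field_derivative deriv Q (g z) * W z) (at z)"
        using DERIV_chain2[OF Q_der g_der[OF z]] .
      have "(deriv ^^ Suc k) f z = deriv (\<lambda>z. exp (g z) * W z ^ k * (1 + Q (g z))) z"
        by (simp, rule deriv_cong_ev) (use Suc eventually_nhds_in_open[OF U z] in \<open>auto simp: Q_def elim!: eventually_mono\<close>)
      also have "\<dots> = exp (g z) * W z ^ Suc k * (1 + deriv_error \<psi> (Suc k) (g z))"
        by (rule DERIV_imp_deriv, rule DERIV_cong[OF has_field_derivative_deriv_error_step[OF exp_der W_der[OF z] Q_g_der]])
          (simp add: Q_def algebra_simps)
      finally show "(deriv ^^ Suc k) f z = exp (g z) * W z ^ Suc k * (1 + deriv_error \<psi> (Suc k) (g z))" .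
    qed
  qed
  thus ?thesis using z f unfolding W_def \<psi>_def by simp
qed

lemma open_norm_gt_nicely_meromorphic:
  assumes f: "f nicely_meromorphic_on UNIV" and M: "M \<ge> 0"
  shows "open {z. norm (f z) > M}"
proof (rule Topological_Spaces.openI)
  fix z assume z: "z \<in> {z. norm (f z) > M}"
  hence "f z \<noteq> 0" using M by auto
  hence "f \<midarrow>z\<rightarrow> f z" using f unfolding nicely_meromorphic_on_def by blast
  from order_tendstoD(1)[OF tendsto_norm[OF this]] z
  have "eventually (\<lambda>w. norm (f w) > M) (at z)" by simp
  hence "eventually (\<lambda>w. norm (f w) > M) (nhds z)" using z by (simp add: eventually_nhds_conv_at)
  thus "\<exists>T. open T \<and> z \<in> T \<and> T \<subseteq> {z. norm (f z) > M}" unfolding eventually_nhds by blast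
qed

lemma holomorphic_bij_betw_inverse:
  assumes U: "open U" and g: "g holomorphic_on U" "bij_betw g U V"
    and \<phi>: "\<And>v. v \<in> V \<Longrightarrow> \<phi> v \<in> U \<and> g (\<phi> v) = v"
  shows "\<phi> holomorphic_on V" "inj_on \<phi> V" "\<And>z. z \<in> U \<Longrightarrow> \<phi> (g z) = z"
proof -
  have inj: "inj_on g U" and V: "V = g ` U" using g(2) by (auto simp: bij_betw_def)
  obtain h where h: "h holomorphic_on g ` U" "\<And>z. z \<in> U \<Longrightarrow> h (g z) = z"
    using holomorphic_has_inverse[OF g(1) U inj] by metis
  have h_\<phi>: "h v = \<phi> v" if "v \<in> V" for v using \<phi>[OF that] h(2)[of "\<phi> v"] by simp
  show "\<phi> holomorphic_on V" using holomorphic_transform[OF h(1)[folded V] h_\<phi>] .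
  show "inj_on \<phi> V"
  proof (rule inj_onI)
    fix x y assume "x \<in> V" "y \<in> V" "\<phi> x = \<phi> y"
    thus "x = y" using \<phi>[of x] \<phi>[of y] by metis
  qed
  show "\<phi> (g z) = z" if "z \<in> U" for z using h_\<phi>[of "g z"] h(2)[OF that] that V by simp
qed

lemma sector_logderiv_quotient_growth:
  fixes G l Q :: "complex \<Rightarrow> complex"
  assumes v0: "v0 \<ge> 0"
    and B: "\<And>v. v \<in> sector v0 k \<Longrightarrow> Re v \<ge> exp 1 \<Longrightarrow> norm (l v) \<le> B * ln (Re v)"
    and Q: "halfplane_decay N Q"
    and G: "\<And>v. v \<in> sector v0 k \<Longrightarrow> G v = inverse (exp (l v)) ^ k * (1 + Q v)"
  shows "\<exists>R. \<forall>v\<in>sector v0 k. norm v \<ge> R \<longrightarrow> \<bar>ln (norm (G v))\<bar> \<le> (1 + real k * B) * ln (Re v)"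
proof -
  obtain R where R: "\<And>v. Re v \<ge> R \<Longrightarrow> norm (Q v) \<le> 1/2"
    using halfplane_decay_small[OF Q, of "1/2"] by auto
  show ?thesis
  proof (intro exI[of _ "2 * max (exp 1) R"] ballI impI)
    fix v assume v: "v \<in> sector v0 k" "norm v \<ge> 2 * max (exp 1) R"
    hence Re_v: "Re v \<ge> max (exp 1) R" by (rule sector_Re_ge_of_norm_ge[OF _ v0])
    hence ln_Re_v: "ln (Re v) \<ge> 1" by (intro one_le_ln) simp
    have "\<bar>ln (norm (G v))\<bar> \<le> 1 + real k * norm (l v)"
      unfolding G[OF v(1)] using R Re_v by (intro abs_ln_norm_inverse_exp_power) auto
    also have "\<dots> \<le> 1 + real k * (B * ln (Re v))"
      using B[OF v(1)] Re_v by (intro add_left_mono mult_left_mono) auto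
    also have "\<dots> \<le> (1 + real k * B) * ln (Re v)"
      using ln_Re_v by (simp add: algebra_simps)
    finally show "\<bar>ln (norm (G v))\<bar> \<le> (1 + real k * B) * ln (Re v)" .
  qed
qed

lemma logderiv_estimates_on_sectors:
  fixes f g \<phi> :: "complex \<Rightarrow> complex" and U :: "complex set" and N :: real
  assumes U: "open U" and g_hol: "g holomorphic_on U" and g_U: "\<And>z. z \<in> U \<Longrightarrow> Re (g z) > N"
    and \<phi>_hol: "\<phi> holomorphic_on {v. Re v > N}" and \<phi>_inj: "inj_on \<phi> {v. Re v > N}"
    and \<phi>_g: "\<And>z. z \<in> U \<Longrightarrow> \<phi> (g z) = z" and g_\<phi>: "\<And>v. Re v > N \<Longrightarrow> \<phi> v \<in> U \<and> g (\<phi> v) = v"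
    and f: "\<And>z. z \<in> U \<Longrightarrow> f z = exp (g z)"
  shows "\<exists>w0>0. \<forall>v0\<ge>w0.
     (\<forall>L. continuous_on (sector v0 1) L \<and> (\<forall>v\<in>sector v0 1. exp (L v) = deriv \<phi> v) \<longrightarrow>
        (\<exists>d>0. \<exists>R. \<forall>v\<in>sector v0 1. norm v \<ge> R \<longrightarrow> norm (L v) \<le> d * ln (Re v)))
   \<and> (\<exists>c :: nat \<Rightarrow> real. (\<forall>k. c k > 0) \<and>
        (\<forall>k. \<exists>R. \<forall>v\<in>sector v0 k. norm v \<ge> R \<longrightarrow>
           \<bar>ln (norm ((deriv ^^ k) f (\<phi> v) / f (\<phi> v)))\<bar> \<le> c k * ln (Re v)))"
proof -
  define \<psi> where "\<psi> v = deriv (deriv \<phi>) v / deriv \<phi> v" for v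
  have \<phi>'_nz: "deriv \<phi> v \<noteq> 0" if "Re v > N" for v
    using holomorphic_injective_imp_regular[OF \<phi>_hol open_halfspace_Re_gt \<phi>_inj] that by simp
  obtain l where l_hol: "l holomorphic_on {v. Re v > N}"
    and l_exp: "\<And>v. Re v > N \<Longrightarrow> exp (l v) = deriv \<phi> v"
    and l_der: "\<And>v. Re v > N \<Longrightarrow> (l has_field_derivative \<psi> v) (at v)"
    using univalent_halfplane_log_deriv[OF \<phi>_hol \<phi>_inj] unfolding \<psi>_def by blast
  obtain C where C: "C > 0" "\<And>v. Re v > N \<Longrightarrow> norm (\<psi> v) \<le> C / (Re v - N)"
    using univalent_halfplane_logderiv_bound[OF \<phi>_hol \<phi>_inj] unfolding \<psi>_def by blast
  have "\<psi> holomorphic_on {v. Re v > N}" unfolding \<psi>_def using \<phi>'_nz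
    by (intro holomorphic_intros holomorphic_deriv \<phi>_hol open_halfspace_Re_gt) auto
  hence \<psi>_decay: "halfplane_decay N \<psi>" using C by (intro halfplane_decayI[of _ _ C 1]) auto
  have quotient: "(deriv ^^ k) f (\<phi> v) / f (\<phi> v) = inverse (exp (l v)) ^ k * (1 + deriv_error \<psi> k v)"
    if "Re v > N" for v k
    using higher_deriv_exp_right_inverse[OF U g_hol g_U \<phi>_hol \<phi>'_nz \<phi>_g f, of "\<phi> v" k]
      g_\<phi>[OF that] l_exp[OF that] f[of "\<phi> v"] unfolding \<psi>_def by simp
  show ?thesis (is "\<exists>w0>0. \<forall>v0\<ge>w0. ?branch v0 \<and> ?quotient v0")
  proof (rule exI[of _ "max 1 (N + 1)"], rule conjI, simp, intro allI impI)
    fix v0 assume v0: "max 1 (N + 1) \<le> v0"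
    obtain B where B: "B > 0" "\<And>k v. v \<in> sector v0 k \<Longrightarrow> Re v \<ge> exp 1 \<Longrightarrow> norm (l v) \<le> B * ln (Re v)"
      using sector_log_growth[OF l_der C(2) less_imp_le[OF C(1)]] v0 by auto
    have in_H: "Re v > N" if "v \<in> sector v0 k" for v k
      using sector_Re_bounds(1)[OF that] v0 by fastforce
    show "?branch v0 \<and> ?quotient v0"
    proof
      show "?branch v0"
      proof (intro allI impI, elim conjE)
        fix L assume L: "continuous_on (sector v0 1) L" "\<forall>v\<in>sector v0 1. exp (L v) = deriv \<phi> v"
        have "continuous_on (sector v0 1) l"
          using holomorphic_on_imp_continuous_on[OF l_hol] by (rule continuous_on_subset) (auto intro: in_H)
        thus "\<exists>d>0. \<exists>R. \<forall>v\<in>sector v0 1. norm v \<ge> R \<longrightarrow> norm (L v) \<le> d * ln (Re v)"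
          using L(2) l_exp in_H v0 by (intro sector_log_branch_growth[OF _ _ B L(1)]) auto
      qed
      show "?quotient v0"
      proof (rule exI[of _ "\<lambda>k. 1 + real k * B"], intro conjI allI)
        fix k :: nat
        show "0 < 1 + real k * B" using B(1) by (simp add: add_pos_nonneg)
        show "\<exists>R. \<forall>v\<in>sector v0 k. norm v \<ge> R \<longrightarrow>
            \<bar>ln (norm ((deriv ^^ k) f (\<phi> v) / f (\<phi> v)))\<bar> \<le> (1 + real k * B) * ln (Re v)"
          by (rule sector_logderiv_quotient_growth[OF _ B(2) halfplane_decay_deriv_error[OF \<psi>_decay]])
            (use v0 quotient in_H in auto)
      qed
    qed
  qed
qed

theorem lemma5p1:
  fixes f :: "complex \<Rightarrow> complex" and M :: real and U :: "complex set"
    and g \<phi> :: "complex \<Rightarrow> complex"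
  assumes f: "transcendental_meromorphic f"
    and M: "M > 0"
    and U: "U \<in> components {z. norm (f z) > M}"
    and nopole: "\<forall>z\<in>U. \<not> is_pole f z"
    and g_hol: "g holomorphic_on U"
    and g_log: "\<forall>z\<in>U. exp (g z) = f z"
    and g_bij: "bij_betw g U {v. Re v > ln M}"
    and \<phi>: "\<forall>v\<in>{v. Re v > ln M}. \<phi> v \<in> U \<and> g (\<phi> v) = v"
  shows "\<exists>w0>0. \<forall>v0\<ge>w0.
     (\<forall>L. continuous_on (sector v0 1) L \<and> (\<forall>v\<in>sector v0 1. exp (L v) = deriv \<phi> v) \<longrightarrow>
        (\<exists>d>0. \<exists>R. \<forall>v\<in>sector v0 1. norm v \<ge> R \<longrightarrow> norm (L v) \<le> d * ln (Re v)))
   \<and> (\<exists>c :: nat \<Rightarrow> real. (\<forall>k. c k > 0) \<and>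
        (\<forall>k. \<exists>R. \<forall>v\<in>sector v0 k. norm v \<ge> R \<longrightarrow>
           \<bar>ln (norm ((deriv ^^ k) f (\<phi> v) / f (\<phi> v)))\<bar> \<le> c k * ln (Re v)))"
proof -
  have "open {z. norm (f z) > M}"
    using f M by (intro open_norm_gt_nicely_meromorphic) (auto simp: transcendental_meromorphic_def)
  hence U_open: "open U" using open_components U by blast
  have g_U: "Re (g z) > ln M" if "z \<in> U" for z using g_bij that by (auto simp: bij_betw_def)
  have g_\<phi>: "\<phi> v \<in> U \<and> g (\<phi> v) = v" if "Re v > ln M" for v using \<phi> that by blast
  note \<phi>_inverse = holomorphic_bij_betw_inverse[OF U_open g_hol g_bij, of \<phi>]
  show ?thesis
  proof (rule logderiv_estimates_on_sectors[OF U_open g_hol g_U _ _ _ g_\<phi>])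
    show "\<phi> holomorphic_on {v. Re v > ln M}" "inj_on \<phi> {v. Re v > ln M}"
      using \<phi>_inverse(1,2) g_\<phi> by auto
    show "\<phi> (g z) = z" if "z \<in> U" for z using \<phi>_inverse(3) g_\<phi> that by auto
    show "f z = exp (g z)" if "z \<in> U" for z using g_log that by simp
  qed
qed

end
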